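(* Let $IS$ be an ISRL with model $M$ and $\varphi$ a formula of the $A\bar BN$ fragment of EHS$^{+}$. If $I,I'$ are intervals of $M$ with $\mathrm{g}(I)=\mathrm{g}(I')$, then $MCT_I^\varphi=MCT_{I'}^\varphi$.
   Context: **Regular expressions.** For a finite alphabet $X$, $RE_X$ is the set of regular expressions $e ::= \emptyset \mid \epsilon \mid s \mid e;e \mid e+e \mid e^*$ with $s\in X$. $L(e)$ denotes the standard language of $e$. **ISRL.** Fix agents $A=\{0,\dots,m\}$ and a finite set $\mathit{Var}$ of propositional variables. An ISRL is $IS=(\{L_i\},\{l_i^0\},\{ACT_i\},\{P_i\},\{t_i\},\lambda)$ where, for each $i\in A$: - $L_i$ is a finite set of local states and $l_i^0\in L_i$; - $ACT_i$ is a finite set of actions and $P_i:L_i\to 2^{ACT_i}$; - $t_i\subseteq L_i\times ACT\times L_i$, with $ACT=ACT_0\times\dots\times ACT_m$; - $\lambda:\mathit{Var}\to RE_G$, where $G=L_0\times\dots\times L_m$. $t^G((l_0,\dots,l_m),(l'_0,\dots,l'_m))$ holds iff some $(a_0,\dots,a_m)\in ACT$ has $a_i\in P_i(l_i)$ and $(l_i,(a_0,\dots,a_m),l'_i)\in t_i$ for all $i$. **Model of $IS$.** - States $S$ are the nonempty sequences $g_0\dots g_k$ with $g_0=(l_0^0,\dots,l_m^0)$ and $t^G(g_j,g_{j+1})$ for all $j<k$. - $t(g_0\dots g_k,g'_0\dots g'_l)$ iff $l=k+1$ and $g_j=g'_j$ for all $j\le k$. - $g_0\dots g_k\sim_i g'_0\dots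 g'_l$ iff $g_k,g'_l$ have the same $i$-th component. - $\mathrm{g}(g_0\dots g_k)=g_k$. **Intervals.** An interval is a nonempty sequence $I=s_1\dots s_n$ of states with $t(s_j,s_{j+1})$; $\mathit{first}(I)=s_1$, $\mathit{last}(I)=s_n$, $\mathrm{g}(I)=\mathrm{g}(s_1)\dots\mathrm{g}(s_n)$, and $\mathit{pi}(I)$ iff $n=1$. **Relations.** - $I\sim_i I'$ iff $|I|=|I'|$ and the states are pointwise $\sim_i$-related; $\sim_\Gamma$ is the transitive closure of $\bigcup_{i\in\Gamma}\sim_i$. - $I R_A I'$ iff $\mathit{first}(I')=\mathit{last}(I)$. - $I R_{\bar B} I'$ iff $I'=II_1$ for some interval $I_1$. - $I R_N I'$ iff $t(\mathit{last}(I),\mathit{first}(I'))$. - $R_{K_i}=\sim_i$, $R_{C_\Gamma}=\sim_\Gamma$, $R_{\langle A\rangle}=R_A$, $R_{\langle\bar B\rangle}=R_{\bar B}$, $R_{\langle N\rangle}=R_N$. **$A\bar BN$ fragment of EHS$^{+}$.** Syntax: $\varphi::=\mathit{pi}\mid p\mid\neg\varphi\mid\varphi\wedge\varphi\mid K_i\varphi\mid C_\Gamma\varphi\mid\langle A\rangle\varphi\mid\langle\bar B\rangle\varphi\mid\langle N\rangle\varphi$. A top-level sub-formula of $\varphi$ is a sub-formula of the form $X\psi$ with $X$ one of these modalities that is not in the scope of any modality. **Automata.** For $p\in\mathit{Var}$ let $\mathcal A^p$ be the minimal complete deterministic finite automaton for $L(\lambda(p))$ over alphabet $G$. $\mathcal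 A_I$ maps each $p$ to the state of $\mathcal A^p$ reached after reading $\mathrm{g}(I)$. **Modal context tree.** $MCT_I^\varphi$ is defined by recursion on $\varphi$ as the pair consisting of: - the root label $(\mathrm{g}(\mathit{first}(I)),\mathrm{g}(\mathit{last}(I)),\mathit{pi}(I),\mathcal A_I)$; - for each top-level sub-formula $X\psi$ of $\varphi$, the set $\{MCT_{I'}^\psi : I R_X I'\}$. *)

theory Defs
  imports Main
begin

datatype 'a rexp = REmpty | REps | RAtom 'a | RSeq "'a rexp" "'a rexp"
  | RAlt "'a rexp" "'a rexp" | RStar "'a rexp"

inductive_set kstar :: "'a list set \<Rightarrow> 'a list set" for A where
  kstar_nil: "[] \<in> kstar A"
| kstar_app: "u \<in> A \<Longrightarrow> v \<in> kstar A \<Longrightarrow> u @ v \<in> kstar A"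

primrec lang :: "'a rexp \<Rightarrow> 'a list set" where
  "lang REmpty = {}"
| "lang REps = {[]}"
| "lang (RAtom s) = {[s]}"
| "lang (RSeq e f) = {u @ v |u v. u \<in> lang e \<and> v \<in> lang f}"
| "lang (RAlt e f) = lang e \<union> lang f"
| "lang (RStar e) = kstar (lang e)"

primrec ratoms :: "'a rexp \<Rightarrow> 'a set" where
  "ratoms REmpty = {}"
| "ratoms REps = {}"
| "ratoms (RAtom s) = {s}"
| "ratoms (RSeq e f) = ratoms e \<union> ratoms f"
| "ratoms (RAlt e f) = ratoms e \<union> ratoms f"
| "ratoms (RStar e) = ratoms e"

text \<open>Agents are 0..nag; local states of all agents live in a common type 'l
 (agent i uses the subset Ls i), actions in a common type 'act.  Global states
 and joint actions are lists of length nag+1.\<close>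

record ('l, 'act, 'v) isrl =
  nag :: nat
  Ls :: "nat \<Rightarrow> 'l set"
  l0 :: "nat \<Rightarrow> 'l"
  Acts :: "nat \<Rightarrow> 'act set"
  Prot :: "nat \<Rightarrow> 'l \<Rightarrow> 'act set"
  trans :: "nat \<Rightarrow> ('l \<times> 'act list \<times> 'l) set"
  lab :: "'v \<Rightarrow> 'l list rexp"

definition Gset :: "('l, 'act, 'v) isrl \<Rightarrow> 'l list set" where
  "Gset IS = {g. length g = Suc (nag IS) \<and> (\<forall>i\<le>nag IS. g ! i \<in> Ls IS i)}"

definition ACTset :: "('l, 'act, 'v) isrl \<Rightarrow> 'act list set" where
  "ACTset IS = {a. length a = Suc (nag IS) \<and> (\<forall>i\<le>nag IS. a ! i \<in> Acts IS i)}"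

definition wf_isrl :: "('l, 'act, 'v) isrl \<Rightarrow> bool" where
  "wf_isrl IS \<longleftrightarrow> finite (UNIV :: 'v set) \<and>
     (\<forall>i\<le>nag IS. finite (Ls IS i) \<and> l0 IS i \<in> Ls IS i \<and> finite (Acts IS i)
        \<and> (\<forall>l\<in>Ls IS i. Prot IS i l \<subseteq> Acts IS i)
        \<and> trans IS i \<subseteq> Ls IS i \<times> ACTset IS \<times> Ls IS i)
     \<and> (\<forall>p. ratoms (lab IS p) \<subseteq> Gset IS)"

definition tG :: "('l, 'act, 'v) isrl \<Rightarrow> 'l list \<Rightarrow> 'l list \<Rightarrow> bool" where
  "tG IS g g' \<longleftrightarrow> length g = Suc (nag IS) \<and> length g' = Suc (nag IS) \<and>
     (\<exists>a\<in>ACTset IS. \<forall>i\<le>nag IS. a ! i \<in> Prot IS i (g ! i) \<and> (g ! i, a, g' ! i) \<in> trans IS i)"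

definition ginit :: "('l, 'act, 'v) isrl \<Rightarrow> 'l list" where
  "ginit IS = map (l0 IS) [0..<Suc (nag IS)]"

definition is_state :: "('l, 'act, 'v) isrl \<Rightarrow> 'l list list \<Rightarrow> bool" where
  "is_state IS s \<longleftrightarrow> s \<noteq> [] \<and> hd s = ginit IS \<and>
     (\<forall>j. Suc j < length s \<longrightarrow> tG IS (s ! j) (s ! Suc j))"

definition tM :: "('l, 'act, 'v) isrl \<Rightarrow> 'l list list \<Rightarrow> 'l list list \<Rightarrow> bool" where
  "tM IS s s' \<longleftrightarrow> is_state IS s \<and> is_state IS s' \<and>
     length s' = Suc (length s) \<and> take (length s) s' = s"

definition simS :: "('l, 'act, 'v) isrl \<Rightarrow> nat \<Rightarrow> 'l list list \<Rightarrow> 'l list list \<Rightarrow> bool" where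
  "simS IS i s s' \<longleftrightarrow> is_state IS s \<and> is_state IS s' \<and> last s ! i = last s' ! i"

text \<open>g of a state is its last global state.\<close>

definition is_interval :: "('l, 'act, 'v) isrl \<Rightarrow> 'l list list list \<Rightarrow> bool" where
  "is_interval IS I \<longleftrightarrow> I \<noteq> [] \<and> (\<forall>s\<in>set I. is_state IS s) \<and>
     (\<forall>j. Suc j < length I \<longrightarrow> tM IS (I ! j) (I ! Suc j))"

definition gI :: "'l list list list \<Rightarrow> 'l list list" where
  "gI I = map last I"

definition simI :: "('l, 'act, 'v) isrl \<Rightarrow> nat \<Rightarrow> 'l list list list \<Rightarrow> 'l list list list \<Rightarrow> bool" where
  "simI IS i I I' \<longleftrightarrow> is_interval IS I \<and> is_interval IS I' \<and> length I = length I' \<and>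
     (\<forall>j<length I. simS IS i (I ! j) (I' ! j))"

datatype modality = MK nat | MC "nat set" | MA | MBbar | MN

datatype 'v form = FPi | FProp 'v | FNeg "'v form" | FAnd "'v form" "'v form"
  | FMod modality "'v form"

primrec agents_mod :: "modality \<Rightarrow> nat set" where
  "agents_mod (MK i) = {i}"
| "agents_mod (MC \<Gamma>) = \<Gamma>"
| "agents_mod MA = {}"
| "agents_mod MBbar = {}"
| "agents_mod MN = {}"

primrec agents_form :: "'v form \<Rightarrow> nat set" where
  "agents_form FPi = {}"
| "agents_form (FProp p) = {}"
| "agents_form (FNeg f) = agents_form f"
| "agents_form (FAnd f g) = agents_form f \<union> agents_form g"
| "agents_form (FMod X f) = agents_mod X \<union> agents_form f"

primrec toplevel :: "'v form \<Rightarrow> (modality \<times> 'v form) set" where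
  "toplevel FPi = {}"
| "toplevel (FProp p) = {}"
| "toplevel (FNeg f) = toplevel f"
| "toplevel (FAnd f g) = toplevel f \<union> toplevel g"
| "toplevel (FMod X f) = {(X, f)}"

lemma toplevel_smaller: "(X, \<psi>) \<in> toplevel \<phi> \<Longrightarrow> size \<psi> < size \<phi>"
  by (induction \<phi>) auto

fun Rel :: "('l, 'act, 'v) isrl \<Rightarrow> modality \<Rightarrow> 'l list list list \<Rightarrow> 'l list list list \<Rightarrow> bool" where
  "Rel IS (MK i) I J = simI IS i I J"
| "Rel IS (MC \<Gamma>) I J = (is_interval IS I \<and> is_interval IS J \<and>
     tranclp (\<lambda>I1 I2. \<exists>i\<in>\<Gamma>. simI IS i I1 I2) I J)"
| "Rel IS MA I J = (is_interval IS I \<and> is_interval IS J \<and> hd J = last I)"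
| "Rel IS MBbar I J = (is_interval IS I \<and> is_interval IS J \<and>
     (\<exists>I1. is_interval IS I1 \<and> J = I @ I1))"
| "Rel IS MN I J = (is_interval IS I \<and> is_interval IS J \<and> tM IS (last I) (hd J))"

record ('q, 'a) dfa =
  dstates :: "'q set"
  dinit :: 'q
  ddelta :: "'q \<Rightarrow> 'a \<Rightarrow> 'q"
  dfinal :: "'q set"

definition complete_dfa :: "'a set \<Rightarrow> ('q, 'a) dfa \<Rightarrow> bool" where
  "complete_dfa \<Sigma> D \<longleftrightarrow> finite (dstates D) \<and> dinit D \<in> dstates D \<and>
     (\<forall>q\<in>dstates D. \<forall>a\<in>\<Sigma>. ddelta D q a \<in> dstates D) \<and> dfinal D \<subseteq> dstates D"

definition dreach :: "('q, 'a) dfa \<Rightarrow> 'a list \<Rightarrow> 'q" where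
  "dreach D w = foldl (ddelta D) (dinit D) w"

definition dlang :: "'a set \<Rightarrow> ('q, 'a) dfa \<Rightarrow> 'a list set" where
  "dlang \<Sigma> D = {w. set w \<subseteq> \<Sigma> \<and> dreach D w \<in> dfinal D}"

text \<open>Minimal complete DFA for L over alphabet Sigma: a complete DFA recognising L
 with no more states than any complete DFA recognising L (every finite DFA is
 isomorphic to one with natural-number states).\<close>

definition minimal_complete_dfa :: "'a set \<Rightarrow> 'a list set \<Rightarrow> ('q, 'a) dfa \<Rightarrow> bool" where
  "minimal_complete_dfa \<Sigma> L D \<longleftrightarrow> complete_dfa \<Sigma> D \<and> dlang \<Sigma> D = L \<and>
     (\<forall>D' :: (nat, 'a) dfa. complete_dfa \<Sigma> D' \<and> dlang \<Sigma> D' = L \<longrightarrow>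
        card (dstates D) \<le> card (dstates D'))"

definition autI :: "('v \<Rightarrow> ('q, 'l list) dfa) \<Rightarrow> 'l list list list \<Rightarrow> 'v \<Rightarrow> 'q" where
  "autI Aut I = (\<lambda>p. dreach (Aut p) (gI I))"

definition mct_root :: "('v \<Rightarrow> ('q, 'l list) dfa) \<Rightarrow> 'l list list list
     \<Rightarrow> 'l list \<times> 'l list \<times> bool \<times> ('v \<Rightarrow> 'q)" where
  "mct_root Aut I = (last (hd I), last (last I), length I = 1, autI Aut I)"

text \<open>mct_eq IS Aut phi I I' expresses MCT_I^phi = MCT_I'^phi, unfolding equality of
 the recursively defined trees: equal root labels and, for each top-level
 sub-formula X psi, equal sets {MCT_J^psi : I R_X J} = {MCT_J'^psi : I' R_X J'}.\<close>

function mct_eq :: "('l, 'act, 'v) isrl \<Rightarrow> ('v \<Rightarrow> ('q, 'l list) dfa) \<Rightarrow> 'v form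
     \<Rightarrow> 'l list list list \<Rightarrow> 'l list list list \<Rightarrow> bool" where
  "mct_eq IS Aut \<phi> I I' \<longleftrightarrow> mct_root Aut I = mct_root Aut I' \<and>
     (\<forall>X \<psi>. (X, \<psi>) \<in> toplevel \<phi> \<longrightarrow>
        (\<forall>J. Rel IS X I J \<longrightarrow> (\<exists>J'. Rel IS X I' J' \<and> mct_eq IS Aut \<psi> J J')) \<and>
        (\<forall>J'. Rel IS X I' J' \<longrightarrow> (\<exists>J. Rel IS X I J \<and> mct_eq IS Aut \<psi> J J')))"
  by pat_completeness auto
termination
  by (relation "measure (\<lambda>(IS, Aut, \<phi>, I, I'). size \<phi>)") (auto dest: toplevel_smaller)

end

theory Submission
  imports Defs "HOL-Library.Sublist"
begin

text \<open>
  The root label of MCT_I is a function of g(I). For the epistemic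
  modalities, the relations R_{K_i} and R_{C_Gamma} only compare last global states, so they do
  not see I beyond g(I). For the temporal modalities, every interval J reached from I consists of
  states extending the history s = last I; since the transition relation of the model only looks at
  the last global state, replacing the prefix s of each state of J by s' = last I' (which has the
  same last global state) yields an interval reached from I' with the same g. An induction on the
  formula then matches the subtrees on both sides.
\<close>

lemma is_state_iff_successively:
  "is_state IS s \<longleftrightarrow> s \<noteq> [] \<and> hd s = ginit IS \<and> successively (tG IS) s"
  unfolding is_state_def successively_conv_nth by blast

lemma is_interval_iff_successively:
  "is_interval IS I \<longleftrightarrow> I \<noteq> [] \<and> (\<forall>s\<in>set I. is_state IS s) \<and> successively (tM IS) I"
  unfolding is_interval_def successively_conv_nth by blast

lemma is_interval_append:
  assumes "is_interval IS A" "is_interval IS B" "tM IS (last A) (hd B)"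
  shows "is_interval IS (A @ B)"
  using assms unfolding is_interval_iff_successively by (auto simp: successively_append_iff)

lemma Rel_is_interval: "Rel IS X I J \<Longrightarrow> is_interval IS J"
  by (cases X) (auto simp: simI_def)

lemma prefix_iff_take: "prefix s t \<longleftrightarrow> take (length s) t = s"
  unfolding prefix_def by (metis append_eq_conv_conj append_take_drop_id)

lemma tM_prefix: "tM IS s t \<Longrightarrow> prefix s t"
  unfolding tM_def prefix_iff_take by auto

lemma is_interval_prefix_nth:
  assumes "is_interval IS J" "k < length J"
  shows "prefix (hd J) (J ! k)"
  using assms(2)
proof (induction k)
  case 0
  then show ?case by (simp add: hd_conv_nth)
next
  case (Suc k)
  then have "tM IS (J ! k) (J ! Suc k)"
    using assms(1) unfolding is_interval_def by blast
  with Suc show ?case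
    using tM_prefix prefix_order.trans by fastforce
qed

lemma is_interval_prefix:
  "is_interval IS J \<Longrightarrow> t \<in> set J \<Longrightarrow> prefix (hd J) t"
  using is_interval_prefix_nth by (metis in_set_conv_nth)

definition rebase :: "'a list \<Rightarrow> 'a list \<Rightarrow> 'a list \<Rightarrow> 'a list" where
  "rebase s s' t = s' @ drop (length s) t"

lemma rebase_self [simp]: "rebase s s' s = s'"
  by (simp add: rebase_def)

lemma rebase_append [simp]: "rebase s s' (s @ d) = s' @ d"
  by (simp add: rebase_def)

lemma last_rebase:
  assumes "s' \<noteq> []" "last s = last s'" "prefix s t"
  shows "last (rebase s s' t) = last t"
  using assms by (auto simp: prefix_def last_append)

lemma is_state_rebase:
  assumes "is_state IS s'" "last s = last s'" "is_state IS t" "prefix s t" "s \<noteq> []"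
  shows "is_state IS (rebase s s' t)"
proof -
  obtain d where t: "t = s @ d" using assms(4) by (auto simp: prefix_def)
  have "successively (tG IS) d" and "d = [] \<or> tG IS (last s) (hd d)"
    using assms(3,5) unfolding t is_state_iff_successively
    by (auto simp: successively_append_iff)
  with assms(1,2) show ?thesis
    unfolding t is_state_iff_successively by (auto simp: successively_append_iff)
qed

lemma tM_rebase:
  assumes "is_state IS s'" "last s = last s'" "tM IS t1 t2" "prefix s t1" "s \<noteq> []"
  shows "tM IS (rebase s s' t1) (rebase s s' t2)"
proof -
  obtain d1 where t1: "t1 = s @ d1" using assms(4) by (auto simp: prefix_def)
  from assms(3) have "t2 = t1 @ drop (length t1) t2" and "length (drop (length t1) t2) = 1"
    unfolding tM_def by (metis append_take_drop_id, simp)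
  then obtain x where t2: "t2 = t1 @ [x]" by (metis length_Suc_conv One_nat_def length_0_conv)
  have "prefix s t2" using assms(4) t2 by auto
  then have "is_state IS (rebase s s' t1)" "is_state IS (rebase s s' t2)"
    using assms is_state_rebase unfolding tM_def by blast+
  then show ?thesis unfolding tM_def t2 t1 by (simp add: rebase_def)
qed

lemma is_interval_rebase:
  assumes "is_state IS s'" "last s = last s'" "is_interval IS J" "\<forall>t\<in>set J. prefix s t" "s \<noteq> []"
  shows "is_interval IS (map (rebase s s') J)" and "gI (map (rebase s s') J) = gI J"
proof -
  have J: "J \<noteq> []" "\<forall>t\<in>set J. is_state IS t" "successively (tM IS) J"
    using assms(3) unfolding is_interval_iff_successively by auto
  have "successively (tM IS) (map (rebase s s') J)"
    unfolding successively_map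
    by (rule successively_mono[OF J(3)]) (use assms tM_rebase in blast)
  with J assms show "is_interval IS (map (rebase s s') J)"
    unfolding is_interval_iff_successively by (auto intro: is_state_rebase)
  have "s' \<noteq> []" using assms(1) unfolding is_state_def by simp
  with assms(2,4) show "gI (map (rebase s s') J) = gI J"
    unfolding gI_def by (simp add: last_rebase)
qed
lemma tM_rebase_from:
  assumes "is_state IS s'" "last s = last s'" "tM IS s t" "s \<noteq> []"
  shows "tM IS s' (rebase s s' t)"
  using tM_rebase[OF assms(1,2,3) _ assms(4)] by simp

lemma gI_eq_length: "gI I = gI I' \<Longrightarrow> length I = length I'"
  unfolding gI_def by (metis length_map)

lemma gI_eq_last_last:
  "gI I = gI I' \<Longrightarrow> I \<noteq> [] \<Longrightarrow> last (last I) = last (last I')"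
  unfolding gI_def by (metis last_map map_is_Nil_conv)

lemma gI_eq_last_hd:
  "gI I = gI I' \<Longrightarrow> I \<noteq> [] \<Longrightarrow> last (hd I) = last (hd I')"
  unfolding gI_def by (metis hd_map map_is_Nil_conv)

lemma simI_transfer:
  assumes "simI IS i I J" "is_interval IS I'" "gI I = gI I'"
  shows "simI IS i I' J"
proof -
  have len: "length I = length I'" using assms(3) by (rule gI_eq_length)
  then have "\<forall>j<length I. last (I ! j) = last (I' ! j)"
    using assms(3) unfolding gI_def by (metis nth_map)
  with assms(1,2) len show ?thesis
    unfolding simI_def simS_def by (auto simp: is_interval_def)
qed

lemma tranclp_simI_transfer:
  assumes "(\<lambda>I1 I2. \<exists>i\<in>\<Gamma>. simI IS i I1 I2)\<^sup>+\<^sup>+ I J" "is_interval IS I'" "gI I = gI I'"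
  shows "(\<lambda>I1 I2. \<exists>i\<in>\<Gamma>. simI IS i I1 I2)\<^sup>+\<^sup>+ I' J"
proof (rule converse_tranclpE[OF assms(1)])
  assume "\<exists>i\<in>\<Gamma>. simI IS i I J"
  then show ?thesis using simI_transfer[OF _ assms(2,3)] by blast
next
  fix K assume "\<exists>i\<in>\<Gamma>. simI IS i I K" and K: "(\<lambda>I1 I2. \<exists>i\<in>\<Gamma>. simI IS i I1 I2)\<^sup>+\<^sup>+ K J"
  then have "\<exists>i\<in>\<Gamma>. simI IS i I' K" using simI_transfer[OF _ assms(2,3)] by blast
  then show ?thesis using K by (rule tranclp_into_tranclp2)
qed

lemma Rel_A_transfer:
  assumes "Rel IS MA I J" "is_interval IS I'" "last (last I) = last (last I')"
  shows "\<exists>J'. Rel IS MA I' J' \<and> gI J' = gI J"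
proof -
  let ?s = "last I" and ?s' = "last I'"
  have I: "is_interval IS I" "is_interval IS J" "hd J = ?s" using assms(1) by auto
  then have s: "is_state IS ?s" "?s \<noteq> []" unfolding is_interval_def is_state_def by auto
  have s': "is_state IS ?s'" using assms(2) unfolding is_interval_def by auto
  have "\<forall>t\<in>set J. prefix ?s t" using is_interval_prefix I by metis
  note J' = is_interval_rebase[OF s' assms(3) I(2) this s(2)]
  have "hd (map (rebase ?s ?s') J) = ?s'"
    using I unfolding is_interval_def by (simp add: hd_map)
  with J' assms(2) show ?thesis by auto
qed

lemma Rel_N_transfer:
  assumes "Rel IS MN I J" "is_interval IS I'" "last (last I) = last (last I')"
  shows "\<exists>J'. Rel IS MN I' J' \<and> gI J' = gI J"
proof -
  let ?s = "last I" and ?s' = "last I'"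
  have I: "is_interval IS I" "is_interval IS J" "tM IS ?s (hd J)" using assms(1) by auto
  then have s: "is_state IS ?s" "?s \<noteq> []" unfolding is_interval_def is_state_def by auto
  have s': "is_state IS ?s'" using assms(2) unfolding is_interval_def by auto
  have "\<forall>t\<in>set J. prefix ?s t"
    using is_interval_prefix[OF I(2)] tM_prefix[OF I(3)] prefix_order.trans by blast
  note J' = is_interval_rebase[OF s' assms(3) I(2) this s(2)]
  have "tM IS ?s' (hd (map (rebase ?s ?s') J))"
    using tM_rebase_from[OF s' assms(3) I(3) s(2)] I(2) unfolding is_interval_def by (simp add: hd_map)
  with J' assms(2) show ?thesis by auto
qed

lemma Rel_Bbar_transfer:
  assumes "Rel IS MBbar I J" "is_interval IS I'" "gI I = gI I'"
  shows "\<exists>J'. Rel IS MBbar I' J' \<and> gI J' = gI J"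
proof -
  obtain I1 where I: "is_interval IS I" "is_interval IS I1" "J = I @ I1"
    using assms(1) by auto
  have "is_interval IS (I @ I1)" using assms(1) I(3) by simp
  then have "tM IS (last I) (hd I1)"
    using I unfolding is_interval_iff_successively by (auto simp: successively_append_iff)
  with I have "Rel IS MN I I1" by simp
  moreover have "last (last I) = last (last I')"
    using I(1) assms(3) unfolding is_interval_def by (simp add: gI_eq_last_last)
  ultimately obtain I1' where I1': "Rel IS MN I' I1'" "gI I1' = gI I1"
    using Rel_N_transfer assms(2) by blast
  then have "is_interval IS (I' @ I1')"
    using is_interval_append assms(2) by auto
  with I1' I assms(2,3) show ?thesis
    by (intro exI[of _ "I' @ I1'"]) (auto simp: gI_def)
qed

lemma Rel_transfer:
  assumes "Rel IS X I J" "is_interval IS I'" "gI I = gI I'"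
  shows "\<exists>J'. Rel IS X I' J' \<and> gI J' = gI J"
proof -
  have "I \<noteq> []" using assms(1) by (cases X) (auto simp: is_interval_def simI_def)
  then have last_eq: "last (last I) = last (last I')" using assms(3) by (rule gI_eq_last_last[rotated])
  show ?thesis
  proof (cases X)
    case (MK i)
    then show ?thesis using assms simI_transfer by (intro exI[of _ J]) auto
  next
    case (MC \<Gamma>)
    then show ?thesis using assms tranclp_simI_transfer by (intro exI[of _ J]) auto
  next
    case MA
    then show ?thesis using assms Rel_A_transfer last_eq by blast
  next
    case MBbar
    then show ?thesis using assms Rel_Bbar_transfer by blast
  next
    case MN
    then show ?thesis using assms Rel_N_transfer last_eq by blast
  qed
qed

lemma mct_root_eq_if_gI_eq:
  assumes "is_interval IS I" "gI I = gI I'"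
  shows "mct_root Aut I = mct_root Aut I'"
proof -
  have "I \<noteq> []" using assms(1) unfolding is_interval_def by simp
  with assms(2) show ?thesis
    unfolding mct_root_def autI_def
    using gI_eq_length[OF assms(2)] gI_eq_last_hd[OF assms(2)] gI_eq_last_last[OF assms(2)] by simp
qed

lemma mct_eq_if_gI_eq:
  "is_interval IS I \<Longrightarrow> is_interval IS I' \<Longrightarrow> gI I = gI I' \<Longrightarrow> mct_eq IS Aut \<phi> I I'"
proof (induction "size \<phi>" arbitrary: \<phi> I I' rule: less_induct)
  case less
  have subtrees:
    "Rel IS X I J \<Longrightarrow> \<exists>J'. Rel IS X I' J' \<and> mct_eq IS Aut \<psi> J J'"
    "Rel IS X I' J \<Longrightarrow> \<exists>J'. Rel IS X I J' \<and> mct_eq IS Aut \<psi> J' J"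
    if "(X, \<psi>) \<in> toplevel \<phi>" for X \<psi> J
  proof -
    have IH: "is_interval IS K \<Longrightarrow> is_interval IS K' \<Longrightarrow> gI K = gI K' \<Longrightarrow> mct_eq IS Aut \<psi> K K'"
      for K K' using less.hyps[OF toplevel_smaller[OF that]] .
    show "\<exists>J'. Rel IS X I' J' \<and> mct_eq IS Aut \<psi> J J'" if J: "Rel IS X I J"
    proof -
      obtain J' where "Rel IS X I' J'" "gI J' = gI J" using Rel_transfer[OF J less.prems(2,3)] by blast
      with J show ?thesis using IH Rel_is_interval by metis
    qed
    show "\<exists>J'. Rel IS X I J' \<and> mct_eq IS Aut \<psi> J' J" if J: "Rel IS X I' J"
    proof -
      obtain J' where "Rel IS X I J'" "gI J' = gI J"
        using Rel_transfer[OF J less.prems(1) less.prems(3)[symmetric]] by blast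
      with J show ?thesis using IH Rel_is_interval by metis
    qed
  qed
  show ?case
    using mct_root_eq_if_gI_eq[OF less.prems(1,3)] subtrees by (subst mct_eq.simps) blast
qed

theorem mainTheorem9:
  fixes IS :: "('l, 'act, 'v) isrl"
    and Aut :: "'v \<Rightarrow> ('q, 'l list) dfa"
    and \<phi> :: "'v form"
    and I I' :: "'l list list list"
  assumes "wf_isrl IS"
    and "\<forall>p. minimal_complete_dfa (Gset IS) (lang (lab IS p)) (Aut p)"
    and "agents_form \<phi> \<subseteq> {0..nag IS}"
    and "is_interval IS I" and "is_interval IS I'"
    and "gI I = gI I'"
  shows "mct_eq IS Aut \<phi> I I'"
  using mct_eq_if_gI_eq assms(4-6) .

end
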